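(* Let $\{\Theta_n\}_{n\ge0}$ be a family of lattice congruences on the weak orders $S_n$ that is both translational and insertional (an $\mathcal{H}$-family). Then the map $c$ embeds $(\mathbb{K}[Z^\Theta_\infty],\bullet_Z,\Delta_Z)$ as a sub Hopf algebra of the Malvenuto–Reutenauer Hopf algebra $(\mathbb{K}[S_\infty],\bullet_S,\Delta_S)$.
   Context: $S_n$: permutations of $[n]$ in one-line notation, with the right weak order (inclusion of sets of inverted value pairs), a lattice. $u\times v=u_1\cdots u_p(p+v_1)\cdots(p+v_q)$ for $u\in S_p,v\in S_q$. $\mathrm{st}(a_1,\dots,a_k)$ is the $u\in S_k$ with $u_i<u_j\iff a_i<a_j$. For $x\in S_{p+q}$, $x_{\bar p}:=u\times v$ with $u$ ($v$) the standardization of the subsequence of entries of $x$ in $[1,p]$ (in $[p+1,p+q]$). $\pi_\downarrow x$: minimum of the $\Theta_n$-class of $x$. Translational: $u\times v\equiv u'\times v'\pmod{\Theta_{p+q}}$ iff $u\equiv u'\pmod{\Theta_p}$ and $v\equiv v'\pmod{\Theta_q}$, for all $p,q$. Insertional: for every $p$-subset $Q\subseteq[p+q]$ and $\varphi_Q(u,v)$ the unique $x\in S_{p+q}$ with $\{x_1,..,x_p\}=Q$, $\mathrm{st}(x_1..x_p)=u$, $\mathrm{st}(x_{p+1}..x_{p+q})=v$: if $u\equiv u'$ mod $\Theta_p$ and $v\equiv v'$ mod $\Theta_q$ then $\varphi_Q(u,v)\equiv\varphi_Q(u',v')$ mod $\Theta_{p+q}$. $\mathbb{K}[S_\infty]=\bigoplus_n\mathbb{K}[S_n]$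 ($\mathbb{K}$ a field) with $u\bullet_S v=\sum_{x\in S_{p+q},x_{\bar p}=u\times v}x$ and $\Delta_S(x)=\sum_{p=0}^n\mathrm{st}(x_1..x_p)\otimes\mathrm{st}(x_{p+1}..x_n)$. $Z_n=\{x\in S_n:\pi_\downarrow x=x\}$, $\mathbb{K}[Z^\Theta_\infty]=\bigoplus_n\mathbb{K}[Z_n]$, $u\bullet_Z v=\sum_{x\in Z_{p+q},x_{\bar p}=u\times v}x$; $c$ maps $x\in Z_n$ to the sum of its class; $r$ fixes $x$ if $\pi_\downarrow x=x$ and kills it otherwise; $\Delta_Z=(r\otimes r)\circ\Delta_S\circ c$. *)

theory Defs
  imports Main
begin

text \<open>A permutation of [n] is the list of its values (one-line notation).\<close>
definition Sn :: "nat \<Rightarrow> nat list set" where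
  "Sn n = {xs. distinct xs \<and> set xs = {1..n}}"

definition inv_set :: "nat list \<Rightarrow> (nat \<times> nat) set" where
  "inv_set xs = {(a, b). a < b \<and> (\<exists>i j. i < j \<and> j < length xs \<and> xs ! i = b \<and> xs ! j = a)}"

definition weak_le :: "nat list \<Rightarrow> nat list \<Rightarrow> bool" where
  "weak_le x y \<longleftrightarrow> inv_set x \<subseteq> inv_set y"

definition wmeet :: "nat \<Rightarrow> nat list \<Rightarrow> nat list \<Rightarrow> nat list" where
  "wmeet n x y = (THE m. m \<in> Sn n \<and> weak_le m x \<and> weak_le m y \<and>
      (\<forall>z\<in>Sn n. weak_le z x \<and> weak_le z y \<longrightarrow> weak_le z m))"

definition wjoin :: "nat \<Rightarrow> nat list \<Rightarrow> nat list \<Rightarrow> nat list" where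
  "wjoin n x y = (THE m. m \<in> Sn n \<and> weak_le x m \<and> weak_le y m \<and>
      (\<forall>z\<in>Sn n. weak_le x z \<and> weak_le y z \<longrightarrow> weak_le m z))"

definition lattice_cong :: "nat \<Rightarrow> (nat list \<times> nat list) set \<Rightarrow> bool" where
  "lattice_cong n R \<longleftrightarrow> equiv (Sn n) R \<and>
     (\<forall>x y z. (x, y) \<in> R \<and> z \<in> Sn n \<longrightarrow>
        (wmeet n x z, wmeet n y z) \<in> R \<and> (wjoin n x z, wjoin n y z) \<in> R)"

definition st :: "nat list \<Rightarrow> nat list" where
  "st as = map (\<lambda>a. card {b \<in> set as. b \<le> a}) as"

definition shift_prod :: "nat list \<Rightarrow> nat list \<Rightarrow> nat list" where
  "shift_prod u v = u @ map (\<lambda>b. length u + b) v"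

definition bar :: "nat \<Rightarrow> nat list \<Rightarrow> nat list" where
  "bar p x = shift_prod (st (filter (\<lambda>a. a \<le> p) x)) (st (filter (\<lambda>a. p < a) x))"

definition phi :: "nat set \<Rightarrow> nat list \<Rightarrow> nat list \<Rightarrow> nat list" where
  "phi Q u v = (THE x. x \<in> Sn (length u + length v) \<and> set (take (length u) x) = Q \<and>
      st (take (length u) x) = u \<and> st (drop (length u) x) = v)"

definition translational :: "(nat \<Rightarrow> (nat list \<times> nat list) set) \<Rightarrow> bool" where
  "translational \<Theta> \<longleftrightarrow> (\<forall>p q u u' v v'. u \<in> Sn p \<longrightarrow> u' \<in> Sn p \<longrightarrow> v \<in> Sn q \<longrightarrow> v' \<in> Sn q \<longrightarrow>
     ((shift_prod u v, shift_prod u' v') \<in> \<Theta> (p + q) \<longleftrightarrow> (u, u') \<in> \<Theta> p \<and> (v, v') \<in> \<Theta> q))"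

definition insertional :: "(nat \<Rightarrow> (nat list \<times> nat list) set) \<Rightarrow> bool" where
  "insertional \<Theta> \<longleftrightarrow> (\<forall>p q Q u u' v v'. Q \<subseteq> {1..p+q} \<longrightarrow> card Q = p \<longrightarrow>
     u \<in> Sn p \<longrightarrow> u' \<in> Sn p \<longrightarrow> v \<in> Sn q \<longrightarrow> v' \<in> Sn q \<longrightarrow>
     (u, u') \<in> \<Theta> p \<longrightarrow> (v, v') \<in> \<Theta> q \<longrightarrow> (phi Q u v, phi Q u' v') \<in> \<Theta> (p + q))"

definition H_family :: "(nat \<Rightarrow> (nat list \<times> nat list) set) \<Rightarrow> bool" where
  "H_family \<Theta> \<longleftrightarrow> (\<forall>n. lattice_cong n (\<Theta> n)) \<and> translational \<Theta> \<and> insertional \<Theta>"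

definition pi_down :: "(nat \<Rightarrow> (nat list \<times> nat list) set) \<Rightarrow> nat list \<Rightarrow> nat list" where
  "pi_down \<Theta> x = (THE m. (m, x) \<in> \<Theta> (length x) \<and>
      (\<forall>y. (y, x) \<in> \<Theta> (length x) \<longrightarrow> weak_le m y))"

definition Zset :: "(nat \<Rightarrow> (nat list \<times> nat list) set) \<Rightarrow> nat list set" where
  "Zset \<Theta> = {x. x \<in> Sn (length x) \<and> pi_down \<Theta> x = x}"

text \<open>An element of K[S_inf] is a finitely supported coefficient function on
  permutations (of all sizes); tensors are finitely supported functions on pairs.\<close>

definition supp :: "('a \<Rightarrow> 'k::zero) \<Rightarrow> 'a set" where
  "supp f = {x. f x \<noteq> 0}"

definition KS :: "(nat list \<Rightarrow> 'k::field) set" where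
  "KS = {f. finite (supp f) \<and> (\<forall>x\<in>supp f. x \<in> Sn (length x))}"

definition KZ :: "(nat \<Rightarrow> (nat list \<times> nat list) set) \<Rightarrow> (nat list \<Rightarrow> 'k::field) set" where
  "KZ \<Theta> = {f. finite (supp f) \<and> supp f \<subseteq> Zset \<Theta>}"

definition unitK :: "nat list \<Rightarrow> 'k::field" where
  "unitK = (\<lambda>x. of_bool (x = []))"

definition counitK :: "(nat list \<Rightarrow> 'k::field) \<Rightarrow> 'k" where
  "counitK f = f []"

definition prodS_basis :: "nat list \<Rightarrow> nat list \<Rightarrow> nat list \<Rightarrow> 'k::field" where
  "prodS_basis u v x = of_bool (x \<in> Sn (length u + length v) \<and> bar (length u) x = shift_prod u v)"

definition mulS :: "(nat list \<Rightarrow> 'k::field) \<Rightarrow> (nat list \<Rightarrow> 'k) \<Rightarrow> nat list \<Rightarrow> 'k" where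
  "mulS f g = (\<lambda>x. \<Sum>u\<in>supp f. \<Sum>v\<in>supp g. f u * g v * prodS_basis u v x)"

definition coprodS_basis :: "nat list \<Rightarrow> nat list \<times> nat list \<Rightarrow> 'k::field" where
  "coprodS_basis x = (\<lambda>(a, b). of_bool (\<exists>p\<le>length x.
      a = st (take p x) \<and> b = st (drop p x)))"

definition DeltaS :: "(nat list \<Rightarrow> 'k::field) \<Rightarrow> nat list \<times> nat list \<Rightarrow> 'k" where
  "DeltaS f = (\<lambda>ab. \<Sum>x\<in>supp f. f x * coprodS_basis x ab)"

definition prodZ_basis :: "(nat \<Rightarrow> (nat list \<times> nat list) set) \<Rightarrow> nat list \<Rightarrow> nat list \<Rightarrow> nat list \<Rightarrow> 'k::field" where
  "prodZ_basis \<Theta> u v x = of_bool (x \<in> Zset \<Theta> \<and> length x = length u + length v \<and>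
      bar (length u) x = shift_prod u v)"

definition mulZ :: "(nat \<Rightarrow> (nat list \<times> nat list) set) \<Rightarrow> (nat list \<Rightarrow> 'k::field) \<Rightarrow> (nat list \<Rightarrow> 'k) \<Rightarrow> nat list \<Rightarrow> 'k" where
  "mulZ \<Theta> f g = (\<lambda>x. \<Sum>u\<in>supp f. \<Sum>v\<in>supp g. f u * g v * prodZ_basis \<Theta> u v x)"

text \<open>c maps a basis element x of K[Z] to the sum of its Theta-class; extended linearly.\<close>
definition cmap :: "(nat \<Rightarrow> (nat list \<times> nat list) set) \<Rightarrow> (nat list \<Rightarrow> 'k::field) \<Rightarrow> nat list \<Rightarrow> 'k" where
  "cmap \<Theta> f = (\<lambda>y. \<Sum>z\<in>supp f. f z * of_bool ((y, z) \<in> \<Theta> (length z)))"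

definition rmap :: "(nat \<Rightarrow> (nat list \<times> nat list) set) \<Rightarrow> (nat list \<Rightarrow> 'k::field) \<Rightarrow> nat list \<Rightarrow> 'k" where
  "rmap \<Theta> f = (\<lambda>x. if x \<in> Zset \<Theta> then f x else 0)"

definition cc_map :: "(nat \<Rightarrow> (nat list \<times> nat list) set) \<Rightarrow> (nat list \<times> nat list \<Rightarrow> 'k::field) \<Rightarrow> nat list \<times> nat list \<Rightarrow> 'k" where
  "cc_map \<Theta> F = (\<lambda>(a, b). \<Sum>zw\<in>supp F. F zw *
      of_bool ((a, fst zw) \<in> \<Theta> (length (fst zw)) \<and> (b, snd zw) \<in> \<Theta> (length (snd zw))))"

definition rr_map :: "(nat \<Rightarrow> (nat list \<times> nat list) set) \<Rightarrow> (nat list \<times> nat list \<Rightarrow> 'k::field) \<Rightarrow> nat list \<times> nat list \<Rightarrow> 'k" where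
  "rr_map \<Theta> F = (\<lambda>(a, b). if a \<in> Zset \<Theta> \<and> b \<in> Zset \<Theta> then F (a, b) else 0)"

definition DeltaZ :: "(nat \<Rightarrow> (nat list \<times> nat list) set) \<Rightarrow> (nat list \<Rightarrow> 'k::field) \<Rightarrow> nat list \<times> nat list \<Rightarrow> 'k" where
  "DeltaZ \<Theta> f = rr_map \<Theta> (DeltaS (cmap \<Theta> f))"

end

theory Submission
  imports Defs
begin

text \<open>Meets with a fixed permutation preserve \<open>\<Theta>\<^sub>n\<close>, so the meet of an element of a class
  with an element of minimal inversion count stays in the class: every class has a least element
  \<open>\<pi>\<^sub>\<down>x\<close>, and \<open>c(f)(x) = f(\<pi>\<^sub>\<down>x)\<close>. All identities then reduce to two properties of
  \<open>\<pi>\<^sub>\<down>\<close>.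

  Product: \<open>bar p x\<close> is the meet of \<open>x\<close> with the permutation whose inversions are the pairs
  not separated by \<open>p\<close>, so \<open>\<Theta>\<close> respects \<open>bar p\<close>; joining with the permutation whose
  inversions are exactly the separated pairs shows that \<open>Z\<close> is closed under \<open>bar p\<close>. Translationality
  then turns this into \<open>\<pi>\<^sub>\<down>\<close> commuting with the standardized lower and upper parts, which
  matches the terms of \<open>c(f) \<bullet> c(g)\<close> at \<open>x\<close> with those of \<open>f \<bullet> g\<close> at \<open>\<pi>\<^sub>\<down>x\<close>.

  Coproduct: the permutations whose prefix of length \<open>p\<close> standardizes to \<open>a\<close> and whose suffix
  standardizes to \<open>b\<close> are exactly the \<open>\<phi>\<^sub>Q(a, b)\<close>, and insertionality makes
  \<open>\<pi>\<^sub>\<down>(\<phi>\<^sub>Q(a, b))\<close> depend only on the classes of \<open>a\<close> and \<open>b\<close>.\<close>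

section \<open>Relative order of entries and inversion sets\<close>

fun precedes :: "nat list \<Rightarrow> nat \<Rightarrow> nat \<Rightarrow> bool" where
  "precedes [] b a \<longleftrightarrow> False"
| "precedes (x # xs) b a \<longleftrightarrow> (x = b \<and> a \<in> set xs) \<or> precedes xs b a"

lemma precedes_iff_nth:
  "precedes xs b a \<longleftrightarrow> (\<exists>j < length xs. \<exists>i < j. xs ! i = b \<and> xs ! j = a)"
  by (induction xs) (auto simp: Ex_less_Suc2 in_set_conv_nth)

lemma inv_set_precedes: "inv_set xs = {(a, b). a < b \<and> precedes xs b a}"
  unfolding inv_set_def precedes_iff_nth by blast

lemma precedes_mem: "precedes xs b a \<Longrightarrow> b \<in> set xs \<and> a \<in> set xs"
  by (induction xs) auto

lemma precedes_append:
  "precedes (xs @ ys) b a \<longleftrightarrow> precedes xs b a \<or> precedes ys b a \<or> (b \<in> set xs \<and> a \<in> set ys)"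
  by (induction xs) (auto dest: precedes_mem)

lemma precedes_filter: "precedes (filter P xs) b a \<longleftrightarrow> P b \<and> P a \<and> precedes xs b a"
  by (induction xs) (auto dest: precedes_mem)

lemma precedes_map: "inj f \<Longrightarrow> precedes (map f xs) (f b) (f a) \<longleftrightarrow> precedes xs b a"
  by (induction xs) (auto simp: inj_eq image_iff)

lemma precedes_trans: "distinct xs \<Longrightarrow> precedes xs a b \<Longrightarrow> precedes xs b c \<Longrightarrow> precedes xs a c"
  by (induction xs) (auto dest: precedes_mem)

lemma precedes_irrefl: "distinct xs \<Longrightarrow> \<not> precedes xs a a"
  by (induction xs) (auto dest: precedes_mem)

lemma precedes_total: "a \<in> set xs \<Longrightarrow> b \<in> set xs \<Longrightarrow> a \<noteq> b \<Longrightarrow> precedes xs a b \<or> precedes xs b a"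
  by (induction xs) auto

lemma precedes_iff_inv_set:
  assumes "distinct xs"
  shows "precedes xs b a \<longleftrightarrow>
    (a < b \<and> (a, b) \<in> inv_set xs) \<or> (b < a \<and> a \<in> set xs \<and> b \<in> set xs \<and> (b, a) \<notin> inv_set xs)"
  unfolding inv_set_precedes
  using precedes_trans[OF assms] precedes_irrefl[OF assms] precedes_total[of a xs b]
    precedes_mem[of xs b a]
  by (cases a b rule: linorder_cases) blast+

lemma list_eq_if_precedes_eq:
  "distinct xs \<Longrightarrow> distinct ys \<Longrightarrow> set xs = set ys \<Longrightarrow> (\<And>a b. precedes xs a b \<longleftrightarrow> precedes ys a b) \<Longrightarrow> xs = ys"
proof (induction xs arbitrary: ys)
  case (Cons x xs)
  then obtain y ys' where ys: "ys = y # ys'" by (cases ys) auto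
  have "x = y"
  proof (rule ccontr)
    assume "x \<noteq> y"
    then have "precedes (x # xs) y x" using Cons.prems ys by auto
    then show False using Cons.prems(1) precedes_mem by auto
  qed
  moreover have "xs = ys'"
  proof (rule Cons.IH)
    show "set xs = set ys'" using Cons.prems(1-3) ys \<open>x = y\<close> by auto
    show "precedes xs a b \<longleftrightarrow> precedes ys' a b" for a b
      using Cons.prems(1,2) Cons.prems(4)[of a b] ys \<open>x = y\<close> by (auto dest: precedes_mem)
  qed (use Cons.prems ys in auto)
  ultimately show ?case using ys by simp
qed simp

lemma inv_set_inj:
  "distinct x \<Longrightarrow> distinct y \<Longrightarrow> set x = set y \<Longrightarrow> inv_set x = inv_set y \<Longrightarrow> x = y"
  by (rule list_eq_if_precedes_eq) (auto simp: precedes_iff_inv_set)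

lemma Sn_distinct: "x \<in> Sn n \<Longrightarrow> distinct x"
  and Sn_set: "x \<in> Sn n \<Longrightarrow> set x = {1..n}"
  by (auto simp: Sn_def)

lemma length_Sn: "x \<in> Sn n \<Longrightarrow> length x = n"
  unfolding Sn_def by (auto dest!: distinct_card)

lemma finite_Sn: "finite (Sn n)"
proof (rule finite_subset)
  show "Sn n \<subseteq> {xs. set xs \<subseteq> {1..n} \<and> length xs = n}" using length_Sn Sn_set by blast
qed (rule finite_lists_length_eq, simp)

lemma weak_le_antisym: "x \<in> Sn n \<Longrightarrow> y \<in> Sn n \<Longrightarrow> weak_le x y \<Longrightarrow> weak_le y x \<Longrightarrow> x = y"
  unfolding weak_le_def by (rule inv_set_inj) (auto simp: Sn_def)

section \<open>Realisable inversion sets, meets and joins\<close>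

definition pos_pairs :: "nat \<Rightarrow> (nat \<times> nat) set" where
  "pos_pairs n = {(a, b). 1 \<le> a \<and> a < b \<and> b \<le> n}"

definition cotrans :: "(nat \<times> nat) set \<Rightarrow> bool" where
  "cotrans T \<longleftrightarrow> (\<forall>a b c. (a, c) \<in> T \<longrightarrow> a < b \<longrightarrow> b < c \<longrightarrow> (a, b) \<in> T \<or> (b, c) \<in> T)"

lemma trans_pos_pairs: "trans (pos_pairs n)"
  unfolding trans_def pos_pairs_def by auto

lemma finite_pos_pairs: "finite (pos_pairs n)"
  by (rule finite_subset[of _ "{1..n} \<times> {1..n}"]) (auto simp: pos_pairs_def)

lemma inv_set_subset_pos_pairs: "x \<in> Sn n \<Longrightarrow> inv_set x \<subseteq> pos_pairs n"
  unfolding inv_set_precedes pos_pairs_def using precedes_mem Sn_set by fastforce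

lemma trans_inv_set: "distinct x \<Longrightarrow> trans (inv_set x)"
  unfolding inv_set_precedes trans_def using precedes_trans by fastforce

lemma cotrans_inv_set:
  assumes "x \<in> Sn n"
  shows "cotrans (inv_set x)"
  unfolding cotrans_def
proof (intro allI impI)
  fix a b c assume h: "(a, c) \<in> inv_set x" "a < b" "b < c"
  then have ca: "precedes x c a" unfolding inv_set_precedes by auto
  then have "b \<in> set x" using h precedes_mem[OF ca] Sn_set[OF assms] by auto
  then have "precedes x b a \<or> precedes x a b"
    using precedes_total[of b x a] precedes_mem[OF ca] h by auto
  then have "precedes x b a \<or> precedes x c b"
    using precedes_trans[OF Sn_distinct[OF assms] ca] by blast
  then show "(a, b) \<in> inv_set x \<or> (b, c) \<in> inv_set x" using h unfolding inv_set_precedes by auto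
qed

lemma trans_diff_if_cotrans: "cotrans T \<Longrightarrow> trans (pos_pairs n - T)"
  unfolding trans_def cotrans_def pos_pairs_def by (auto 4 3)

lemma cotrans_diff_if_trans: "trans T \<Longrightarrow> cotrans (pos_pairs n - T)"
  unfolding cotrans_def trans_def pos_pairs_def by auto

lemma trancl_subset_pos_pairs: "S \<subseteq> pos_pairs n \<Longrightarrow> S\<^sup>+ \<subseteq> pos_pairs n"
  using trancl_mono_subset[of S "pos_pairs n"] trancl_id[OF trans_pos_pairs] by simp

lemma cotrans_trancl_Un:
  assumes "S1 \<subseteq> pos_pairs n" "S2 \<subseteq> pos_pairs n" "cotrans S1" "cotrans S2"
  shows "cotrans ((S1 \<union> S2)\<^sup>+)"
proof -
  let ?U = "S1 \<union> S2"
  have cU: "(a, c) \<in> ?U \<Longrightarrow> a < b \<Longrightarrow> b < c \<Longrightarrow> (a, b) \<in> ?U \<or> (b, c) \<in> ?U" for a b c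
    using assms(3,4) unfolding cotrans_def by blast
  have "(a, c) \<in> ?U\<^sup>+ \<Longrightarrow> \<forall>b. a < b \<longrightarrow> b < c \<longrightarrow> (a, b) \<in> ?U\<^sup>+ \<or> (b, c) \<in> ?U\<^sup>+" for a c
  proof (induction rule: trancl_induct)
    case (base y)
    then show ?case using cU by blast
  next
    case (step y z)
    show ?case
    proof (intro allI impI)
      fix b assume b: "a < b" "b < z"
      show "(a, b) \<in> ?U\<^sup>+ \<or> (b, z) \<in> ?U\<^sup>+"
      proof (cases b y rule: linorder_cases)
        case less
        then show ?thesis using step b by (meson trancl_into_trancl)
      next
        case equal
        then show ?thesis using step.hyps(1) by simp
      next
        case greater
        then have "(y, b) \<in> ?U \<or> (b, z) \<in> ?U" using cU[OF step.hyps(2)] b by blast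
        then show ?thesis using step.hyps(1) by (meson r_into_trancl trancl_into_trancl)
      qed
    qed
  qed
  then show ?thesis unfolding cotrans_def by blast
qed

lemma precedes_sorted_key:
  "sorted (map r l) \<Longrightarrow> distinct l \<Longrightarrow> inj_on r (set l) \<Longrightarrow>
    precedes l b a \<longleftrightarrow> b \<in> set l \<and> a \<in> set l \<and> r b < r a"
proof (induction l)
  case (Cons x l)
  have "\<forall>y\<in>set l. r x < r y"
    using Cons.prems by (auto simp: le_less inj_on_def)
  then show ?case using Cons by (auto intro: inj_on_subset)
qed simp

definition placed_before :: "(nat \<times> nat) set \<Rightarrow> nat \<Rightarrow> nat \<Rightarrow> bool" where
  "placed_before T b a \<longleftrightarrow> (b < a \<and> (b, a) \<notin> T) \<or> (a < b \<and> (a, b) \<in> T)"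

lemma placed_before_trans:
  assumes "trans T" "cotrans T" "placed_before T c b" "placed_before T b a"
  shows "placed_before T c a"
proof -
  have tT: "(a, b) \<in> T \<Longrightarrow> (b, c) \<in> T \<Longrightarrow> (a, c) \<in> T" for a b c
    using assms(1) unfolding trans_def by blast
  have cT: "(a, c) \<in> T \<Longrightarrow> a < b \<Longrightarrow> b < c \<Longrightarrow> (a, b) \<in> T \<or> (b, c) \<in> T" for a b c
    using assms(2) unfolding cotrans_def by blast
  have "c \<noteq> a" "c \<noteq> b" "b \<noteq> a" using assms(3,4) unfolding placed_before_def by auto
  then consider "c < b" "b < a" | "c < a" "a < b" | "b < c" "c < a" | "b < a" "a < c"
    | "a < c" "c < b" | "a < b" "b < c"
    by linarith
  then show ?thesis
    by cases (use assms(3,4) cT[of c a b] tT[of c a b] tT[of b c a] cT[of b c a] cT[of a b c]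
        tT[of a b c] in \<open>auto simp: placed_before_def\<close>)
qed

text \<open>The realising permutation lists the entries by their number of predecessors under
  \<^const>\<open>placed_before\<close>.\<close>

lemma ex_Sn_inv_set_eq:
  assumes T: "T \<subseteq> pos_pairs n" "trans T" "cotrans T"
  shows "\<exists>m\<in>Sn n. inv_set m = T"
proof -
  let ?lt = "placed_before T"
  have lt_irrefl: "\<not> ?lt a a" and lt_total: "a \<noteq> b \<Longrightarrow> ?lt a b \<or> ?lt b a" for a b
    unfolding placed_before_def by auto
  define r where "r a = card {c \<in> {1..n}. ?lt c a}" for a
  have r_less: "r b < r a" if "?lt b a" "b \<in> {1..n}" for a b
  proof -
    have "{c \<in> {1..n}. ?lt c b} \<subset> {c \<in> {1..n}. ?lt c a}"
      using that placed_before_trans[OF T(2,3)] lt_irrefl by blast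
    then show "r b < r a" unfolding r_def by (rule psubset_card_mono[rotated]) simp
  qed
  have r_less_iff: "r b < r a \<longleftrightarrow> ?lt b a" if "a \<in> {1..n}" "b \<in> {1..n}" for a b
    using that r_less lt_total by (metis less_irrefl less_not_sym)
  have "inj_on r {1..n}"
    unfolding inj_on_def using r_less lt_total by (metis less_irrefl)
  define m where "m = sort_key r [1..<Suc n]"
  have m: "set m = {1..n}" "distinct m" "sorted (map r m)"
    unfolding m_def by auto
  have "precedes m b a \<longleftrightarrow> b \<in> {1..n} \<and> a \<in> {1..n} \<and> ?lt b a" for a b
    using precedes_sorted_key[OF m(3,2)] \<open>inj_on r {1..n}\<close> m(1) r_less_iff by auto
  then have "inv_set m = T"
    using T(1) unfolding inv_set_precedes placed_before_def pos_pairs_def by auto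
  moreover have "m \<in> Sn n" unfolding Sn_def using m by simp
  ultimately show ?thesis by blast
qed

lemma ex_weak_meet:
  assumes x: "x \<in> Sn n" and y: "y \<in> Sn n"
  shows "\<exists>m\<in>Sn n. weak_le m x \<and> weak_le m y \<and> (\<forall>z\<in>Sn n. weak_le z x \<and> weak_le z y \<longrightarrow> weak_le z m)"
proof -
  define N where "N = ((pos_pairs n - inv_set x) \<union> (pos_pairs n - inv_set y))\<^sup>+"
  have "cotrans N" unfolding N_def
    by (rule cotrans_trancl_Un) (auto intro: cotrans_diff_if_trans trans_inv_set Sn_distinct x y)
  moreover have "trans N" unfolding N_def by simp
  ultimately obtain m where m: "m \<in> Sn n" "inv_set m = pos_pairs n - N"
    using ex_Sn_inv_set_eq[of "pos_pairs n - N" n] trans_diff_if_cotrans cotrans_diff_if_trans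
    by blast
  have "weak_le z m" if z: "z \<in> Sn n" "weak_le z x" "weak_le z y" for z
  proof -
    have "trans (pos_pairs n - inv_set z)" using trans_diff_if_cotrans cotrans_inv_set[OF z(1)]
      by blast
    moreover have "(pos_pairs n - inv_set x) \<union> (pos_pairs n - inv_set y) \<subseteq> pos_pairs n - inv_set z"
      using z(2,3) unfolding weak_le_def by blast
    ultimately have "N \<subseteq> pos_pairs n - inv_set z"
      unfolding N_def by (metis trancl_id trancl_mono_subset)
    then show ?thesis unfolding weak_le_def m using inv_set_subset_pos_pairs[OF z(1)] by auto
  qed
  moreover have "weak_le m x" "weak_le m y"
    unfolding weak_le_def m N_def
    using inv_set_subset_pos_pairs[OF x] inv_set_subset_pos_pairs[OF y] by auto
  ultimately show ?thesis using m(1) by blast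
qed

lemma
  assumes "x \<in> Sn n" "y \<in> Sn n"
  shows wmeet_in_Sn: "wmeet n x y \<in> Sn n"
    and wmeet_le1: "weak_le (wmeet n x y) x"
    and wmeet_le2: "weak_le (wmeet n x y) y"
    and wmeet_greatest: "\<And>z. z \<in> Sn n \<Longrightarrow> weak_le z x \<Longrightarrow> weak_le z y \<Longrightarrow> weak_le z (wmeet n x y)"
proof -
  obtain m where m: "m \<in> Sn n" "weak_le m x" "weak_le m y"
    "\<forall>z\<in>Sn n. weak_le z x \<and> weak_le z y \<longrightarrow> weak_le z m"
    using ex_weak_meet[OF assms] by blast
  have "wmeet n x y = m" unfolding wmeet_def
    by (rule the_equality) (use m weak_le_antisym in blast)+
  then show "wmeet n x y \<in> Sn n" "weak_le (wmeet n x y) x" "weak_le (wmeet n x y) y"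
    "\<And>z. z \<in> Sn n \<Longrightarrow> weak_le z x \<Longrightarrow> weak_le z y \<Longrightarrow> weak_le z (wmeet n x y)"
    using m by auto
qed

lemma
  assumes x: "x \<in> Sn n" and y: "y \<in> Sn n"
  shows wjoin_in_Sn: "wjoin n x y \<in> Sn n"
    and inv_set_wjoin: "inv_set (wjoin n x y) = (inv_set x \<union> inv_set y)\<^sup>+"
proof -
  define J where "J = (inv_set x \<union> inv_set y)\<^sup>+"
  have "cotrans J" unfolding J_def
    by (rule cotrans_trancl_Un) (use inv_set_subset_pos_pairs cotrans_inv_set x y in auto)
  moreover have "J \<subseteq> pos_pairs n" unfolding J_def
    by (rule trancl_subset_pos_pairs) (use inv_set_subset_pos_pairs x y in auto)
  ultimately obtain m where m: "m \<in> Sn n" "inv_set m = J"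
    using ex_Sn_inv_set_eq[of J n] unfolding J_def by auto
  have "weak_le m z" if z: "z \<in> Sn n" "weak_le x z" "weak_le y z" for z
  proof -
    have "inv_set x \<union> inv_set y \<subseteq> inv_set z" using z(2,3) unfolding weak_le_def by blast
    then show ?thesis unfolding weak_le_def m J_def
      by (metis trancl_id trancl_mono_subset trans_inv_set Sn_distinct[OF z(1)])
  qed
  moreover have "weak_le x m" "weak_le y m" unfolding weak_le_def m J_def by auto
  ultimately have "wjoin n x y = m" unfolding wjoin_def
    by (intro the_equality) (use m weak_le_antisym in blast)+
  then show "wjoin n x y \<in> Sn n" "inv_set (wjoin n x y) = (inv_set x \<union> inv_set y)\<^sup>+"
    using m unfolding J_def by auto
qed

lemma wmeet_eq_right: "x \<in> Sn n \<Longrightarrow> y \<in> Sn n \<Longrightarrow> weak_le y x \<Longrightarrow> wmeet n x y = y"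
  by (meson wmeet_in_Sn wmeet_le2 wmeet_greatest weak_le_antisym weak_le_def order_refl)

section \<open>Standardization\<close>

definition rank :: "nat set \<Rightarrow> nat \<Rightarrow> nat" where
  "rank S a = card {b \<in> S. b \<le> a}"

lemma st_rank: "st xs = map (rank (set xs)) xs"
  unfolding st_def rank_def ..

lemma length_st [simp]: "length (st xs) = length xs"
  by (simp add: st_rank)

lemma strict_mono_on_rank: "finite S \<Longrightarrow> strict_mono_on S (rank S)"
proof (rule strict_mono_onI)
  fix r s assume "finite S" "r \<in> S" "s \<in> S" "r < s"
  then have "{b \<in> S. b \<le> r} \<subset> {b \<in> S. b \<le> s}"
    by (intro psubsetI) (auto dest: eqset_imp_iff[where x = s])
  then show "rank S r < rank S s"
    unfolding rank_def using \<open>finite S\<close> by (simp add: psubset_card_mono)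
qed

lemma rank_interval:
  assumes "a \<in> {Suc p..n}"
  shows "rank {Suc p..n} a = a - p"
proof -
  have "{b \<in> {Suc p..n}. b \<le> a} = {Suc p..a}" using assms by auto
  then show ?thesis unfolding rank_def by simp
qed

lemma st_eq_map_diff:
  assumes "set xs = {Suc p..n}"
  shows "st xs = map (\<lambda>a. a - p) xs"
  unfolding st_rank assms using rank_interval by (simp add: assms)

lemma st_eq_self: "set xs = {1..n} \<Longrightarrow> st xs = xs"
  using st_eq_map_diff[of xs 0 n] by simp

lemma st_in_Sn:
  assumes "distinct xs"
  shows "st xs \<in> Sn (length xs)"
proof -
  let ?S = "set xs"
  have inj: "inj_on (rank ?S) ?S" by (rule strict_mono_on_imp_inj_on[OF strict_mono_on_rank]) simp
  have "rank ?S ` ?S \<subseteq> {1..card ?S}"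
    unfolding rank_def by (auto simp: Suc_le_eq card_gt_0_iff intro!: card_mono)
  moreover have "card (rank ?S ` ?S) = card {1..card ?S}" using card_image[OF inj] by simp
  ultimately have "rank ?S ` ?S = {1..card ?S}" by (intro card_subset_eq) auto
  then show ?thesis
    using inj assms unfolding Sn_def st_rank by (simp add: distinct_map distinct_card)
qed

lemma st_map_strict_mono:
  assumes "strict_mono_on (set xs) g"
  shows "st (map g xs) = st xs"
proof -
  have "rank (g ` set xs) (g a) = rank (set xs) a" if "a \<in> set xs" for a
  proof -
    have "{c \<in> g ` set xs. c \<le> g a} = g ` {b \<in> set xs. b \<le> a}"
      using assms that by (auto simp: strict_mono_on_leD strict_mono_on_less_eq)
    moreover have "inj_on g {b \<in> set xs. b \<le> a}"
      using strict_mono_on_imp_inj_on[OF assms] by (rule inj_on_subset) blast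
    ultimately show ?thesis unfolding rank_def by (simp add: card_image)
  qed
  then show ?thesis unfolding st_rank by simp
qed

lemma st_inj:
  assumes "set l = set l'" "st l = st l'"
  shows "l = l'"
proof -
  have "inj_on (rank (set l)) (set l \<union> set l')"
    using strict_mono_on_imp_inj_on[OF strict_mono_on_rank] assms(1) by simp
  then show ?thesis using assms unfolding st_rank by (simp add: inj_on_map_eq_map)
qed

section \<open>Splitting a permutation at a value or a position\<close>

definition lower_std :: "nat \<Rightarrow> nat list \<Rightarrow> nat list" where
  "lower_std p x = st (filter (\<lambda>a. a \<le> p) x)"

definition upper_std :: "nat \<Rightarrow> nat list \<Rightarrow> nat list" where
  "upper_std p x = st (filter (\<lambda>a. p < a) x)"

lemma bar_eq_shift_prod_std: "bar p x = shift_prod (lower_std p x) (upper_std p x)"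
  unfolding bar_def lower_std_def upper_std_def ..

lemma
  assumes "x \<in> Sn n" "p \<le> n"
  shows set_filter_le_Sn: "set (filter (\<lambda>a. a \<le> p) x) = {1..p}"
    and set_filter_gt_Sn: "set (filter (\<lambda>a. p < a) x) = {Suc p..n}"
  using assms by (auto simp: Sn_def)

lemma
  assumes "x \<in> Sn n" "p \<le> n"
  shows lower_std_in_Sn: "lower_std p x \<in> Sn p"
    and upper_std_in_Sn: "upper_std p x \<in> Sn (n - p)"
proof -
  have d: "distinct (filter P x)" for P using Sn_distinct[OF assms(1)] by simp
  have "length (filter (\<lambda>a. a \<le> p) x) = card {1..p}"
    unfolding set_filter_le_Sn[OF assms, symmetric] by (rule distinct_card[OF d, symmetric])
  moreover have "length (filter (\<lambda>a. p < a) x) = card {Suc p..n}"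
    unfolding set_filter_gt_Sn[OF assms, symmetric] by (rule distinct_card[OF d, symmetric])
  ultimately have "length (filter (\<lambda>a. a \<le> p) x) = p" "length (filter (\<lambda>a. p < a) x) = n - p"
    by simp_all
  then show "lower_std p x \<in> Sn p" "upper_std p x \<in> Sn (n - p)"
    unfolding lower_std_def upper_std_def using st_in_Sn[OF d] by metis+
qed

lemma length_lower_std: "x \<in> Sn n \<Longrightarrow> p \<le> n \<Longrightarrow> length (lower_std p x) = p"
  using length_Sn lower_std_in_Sn by blast

lemma bar_eq_filter:
  assumes x: "x \<in> Sn n" and p: "p \<le> n"
  shows "bar p x = filter (\<lambda>a. a \<le> p) x @ filter (\<lambda>a. p < a) x"
proof -
  have "lower_std p x = filter (\<lambda>a. a \<le> p) x"
    unfolding lower_std_def using st_eq_self set_filter_le_Sn[OF x p] by blast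
  moreover have "map ((+) p) (upper_std p x) = filter (\<lambda>a. p < a) x"
    unfolding upper_std_def st_eq_map_diff[OF set_filter_gt_Sn[OF x p]] by (induction x) auto
  ultimately show ?thesis
    unfolding bar_eq_shift_prod_std shift_prod_def length_lower_std[OF x p] by simp
qed

lemma bar_in_Sn:
  assumes "x \<in> Sn n" "p \<le> n"
  shows "bar p x \<in> Sn n"
proof -
  have "set (bar p x) = set x" "distinct (bar p x)"
    using Sn_distinct[OF assms(1)] unfolding bar_eq_filter[OF assms] by auto
  then show ?thesis using assms(1) unfolding Sn_def by simp
qed

definition same_side :: "nat \<Rightarrow> (nat \<times> nat) set" where
  "same_side p = {(a, b). b \<le> p \<or> p < a}"

definition cross_pairs :: "nat \<Rightarrow> nat \<Rightarrow> (nat \<times> nat) set" where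
  "cross_pairs n p = {(a, b). 1 \<le> a \<and> a \<le> p \<and> p < b \<and> b \<le> n}"

lemma inv_set_bar:
  assumes "x \<in> Sn n" "p \<le> n"
  shows "inv_set (bar p x) = inv_set x \<inter> same_side p"
  unfolding bar_eq_filter[OF assms] inv_set_precedes precedes_append precedes_filter same_side_def
  by auto

lemma shift_prod_in_Sn:
  assumes u: "u \<in> Sn p" and v: "v \<in> Sn q"
  shows "shift_prod u v \<in> Sn (p + q)"
proof -
  have "set (map ((+) p) v) = {Suc p..p + q}"
    using Sn_set[OF v] by (auto simp: image_iff intro: bexI[where x = "_ - p"])
  then show ?thesis using u v length_Sn[OF u]
    unfolding Sn_def shift_prod_def by (auto simp: distinct_map)
qed

lemma shift_prod_inj:
  "length u = length u' \<Longrightarrow> shift_prod u v = shift_prod u' v' \<Longrightarrow> u = u' \<and> v = v'"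
  unfolding shift_prod_def by simp

lemma inv_set_shift_prod:
  assumes u: "u \<in> Sn p" and v: "v \<in> Sn q"
  shows "inv_set (shift_prod u v) = inv_set u \<union> map_prod ((+) p) ((+) p) ` inv_set v"
proof -
  have shift: "precedes (map ((+) p) v) b a \<longleftrightarrow> (\<exists>a' b'. a = p + a' \<and> b = p + b' \<and> precedes v b' a')"
    for a b
  proof
    assume h: "precedes (map ((+) p) v) b a"
    then obtain a' b' where "a = p + a'" "b = p + b'" using precedes_mem[OF h] by auto
    then show "\<exists>a' b'. a = p + a' \<and> b = p + b' \<and> precedes v b' a'"
      using h precedes_map[of "(+) p" v] by auto
  qed (use precedes_map[of "(+) p" v] in auto)
  show ?thesis
    using Sn_set[OF u] Sn_set[OF v] length_Sn[OF u] shift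
    unfolding shift_prod_def inv_set_precedes precedes_append by fastforce
qed

lemma weak_le_shift_prod:
  assumes "u \<in> Sn p" "u' \<in> Sn p" "v \<in> Sn q" "v' \<in> Sn q" "weak_le u u'" "weak_le v v'"
  shows "weak_le (shift_prod u v) (shift_prod u' v')"
  using assms
  unfolding weak_le_def inv_set_shift_prod[OF assms(1,3)] inv_set_shift_prod[OF assms(2,4)]
  by blast

lemma ex_Sn_inv_set_same_side: "\<exists>w\<in>Sn n. inv_set w = pos_pairs n \<inter> same_side p"
  by (rule ex_Sn_inv_set_eq) (auto simp: trans_def cotrans_def pos_pairs_def same_side_def)

lemma ex_Sn_inv_set_cross_pairs: "\<exists>z\<in>Sn n. inv_set z = cross_pairs n p"
  by (rule ex_Sn_inv_set_eq) (auto simp: trans_def cotrans_def pos_pairs_def cross_pairs_def)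

lemma trans_Un_cross_pairs:
  assumes "S \<subseteq> pos_pairs n \<inter> same_side p" "trans S"
  shows "trans (S \<union> cross_pairs n p)"
proof (rule transI)
  fix a b c assume ab: "(a, b) \<in> S \<union> cross_pairs n p" and bc: "(b, c) \<in> S \<union> cross_pairs n p"
  have S: "1 \<le> a \<and> a < b \<and> b \<le> n \<and> (b \<le> p \<or> p < a)" if "(a, b) \<in> S" for a b
    using assms(1) that unfolding pos_pairs_def same_side_def by auto
  show "(a, c) \<in> S \<union> cross_pairs n p"
  proof (cases "(a, b) \<in> S \<and> (b, c) \<in> S")
    case True
    then show ?thesis using assms(2) by (meson UnI1 transD)
  next
    case False
    then show ?thesis using ab bc S[of a b] S[of b c] unfolding cross_pairs_def by auto
  qed
qed

lemma bar_eq_wmeet: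
  assumes x: "x \<in> Sn n" and p: "p \<le> n" and w: "w \<in> Sn n" "inv_set w = pos_pairs n \<inter> same_side p"
  shows "wmeet n x w = bar p x"
proof (rule weak_le_antisym)
  show "weak_le (bar p x) (wmeet n x w)"
    using wmeet_greatest[OF x w(1) bar_in_Sn[OF x p]] inv_set_bar[OF x p]
      inv_set_subset_pos_pairs[OF x] w(2)
    unfolding weak_le_def by blast
  show "weak_le (wmeet n x w) (bar p x)"
    using wmeet_le1[OF x w(1)] wmeet_le2[OF x w(1)] inv_set_bar[OF x p] w(2)
    unfolding weak_le_def by blast
qed (use wmeet_in_Sn[OF x w(1)] bar_in_Sn[OF x p] in auto)

lemma Sn_eq_if_split_eq:
  assumes x: "x \<in> Sn n" and x': "x' \<in> Sn n"
    and h: "set (take p x) = set (take p x')" "st (take p x) = st (take p x')"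
      "st (drop p x) = st (drop p x')"
  shows "x = x'"
proof -
  have set_drop: "set (drop p y) = set y - set (take p y)" if "distinct y" for y :: "nat list"
  proof -
    have "set y = set (take p y) \<union> set (drop p y)" by (metis append_take_drop_id set_append)
    then show ?thesis using set_take_disj_set_drop_if_distinct[OF that order_refl] by blast
  qed
  have "take p x = take p x'" using st_inj h(1,2) by blast
  moreover have "set (drop p x) = set (drop p x')"
    using set_drop Sn_distinct[OF x] Sn_distinct[OF x'] Sn_set[OF x] Sn_set[OF x'] h(1) by simp
  then have "drop p x = drop p x'" using st_inj h(3) by blast
  ultimately show ?thesis by (metis append_take_drop_id)
qed

definition relabel :: "nat set \<Rightarrow> nat list \<Rightarrow> nat list" where
  "relabel A u = map (\<lambda>i. sorted_list_of_set A ! (i - 1)) u"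

lemma
  assumes u: "u \<in> Sn k" and A: "finite A" "card A = k"
  shows st_relabel: "st (relabel A u) = u"
    and set_relabel: "set (relabel A u) = A"
    and distinct_relabel: "distinct (relabel A u)"
proof -
  define g where "g i = sorted_list_of_set A ! (i - 1)" for i
  have mono: "strict_mono_on {1..k} g"
    unfolding g_def using A
    by (intro strict_mono_onI sorted_wrt_nth_less[OF strict_sorted_list_of_set]) auto
  show "st (relabel A u) = u"
    using st_map_strict_mono[of u g] mono st_eq_self[OF Sn_set[OF u]] Sn_set[OF u]
    unfolding relabel_def g_def by simp
  have "g ` {1..k} = g ` Suc ` {0..<k}" by (simp add: atLeastLessThanSuc_atLeastAtMost)
  also have "\<dots> = nth (sorted_list_of_set A) ` {0..<k}" unfolding image_image g_def by simp
  also have "\<dots> = A" using A by (simp add: nth_image)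
  finally show "set (relabel A u) = A" using Sn_set[OF u] unfolding relabel_def g_def by simp
  show "distinct (relabel A u)"
    using Sn_distinct[OF u] Sn_set[OF u] strict_mono_on_imp_inj_on[OF mono]
    unfolding relabel_def g_def by (simp add: distinct_map)
qed

lemma phi_spec:
  assumes Q: "Q \<subseteq> {1..p + q}" "card Q = p" and u: "u \<in> Sn p" and v: "v \<in> Sn q"
  shows "phi Q u v \<in> Sn (p + q) \<and> set (take p (phi Q u v)) = Q \<and>
    st (take p (phi Q u v)) = u \<and> st (drop p (phi Q u v)) = v"
proof -
  define R where "R = {1..p + q} - Q"
  define x where "x = relabel Q u @ relabel R v"
  have "finite Q" using Q(1) finite_subset by blast
  moreover have "card R = q" unfolding R_def using Q by (simp add: card_Diff_subset finite_subset)
  ultimately have "st (relabel Q u) = u" "set (relabel Q u) = Q" "distinct (relabel Q u)"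
    and "st (relabel R v) = v" "set (relabel R v) = R" "distinct (relabel R v)"
    using st_relabel set_relabel distinct_relabel u v Q(2) unfolding R_def by auto
  moreover have "length (relabel Q u) = p" using length_Sn[OF u] by (simp add: relabel_def)
  ultimately have x_spec: "x \<in> Sn (p + q) \<and> set (take p x) = Q \<and> st (take p x) = u \<and> st (drop p x) = v"
    using Q(1) unfolding Sn_def x_def R_def by auto
  have "phi Q u v = x" unfolding phi_def length_Sn[OF u] length_Sn[OF v]
    by (rule the_equality) (use x_spec Sn_eq_if_split_eq in metis)+
  then show ?thesis using x_spec by simp
qed

lemma phi_split:
  assumes y: "y \<in> Sn n" and p: "p \<le> n"
  shows "phi (set (take p y)) (st (take p y)) (st (drop p y)) = y"
  unfolding phi_def using assms length_Sn[OF y]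
  by (intro the_equality) (auto intro: Sn_eq_if_split_eq)

lemma bij_betw_phi:
  assumes a: "a \<in> Sn p" and b: "b \<in> Sn q"
  shows "bij_betw (\<lambda>Q. phi Q a b) {Q. Q \<subseteq> {1..p + q} \<and> card Q = p}
    {y \<in> Sn (p + q). st (take p y) = a \<and> st (drop p y) = b}"
proof (rule bij_betw_byWitness[where f' = "\<lambda>y. set (take p y)"])
  show "\<forall>Q \<in> {Q. Q \<subseteq> {1..p + q} \<and> card Q = p}. set (take p (phi Q a b)) = Q"
    using phi_spec a b by blast
  show "(\<lambda>Q. phi Q a b) ` {Q. Q \<subseteq> {1..p + q} \<and> card Q = p}
      \<subseteq> {y \<in> Sn (p + q). st (take p y) = a \<and> st (drop p y) = b}"
    using phi_spec a b by blast
  show "\<forall>y \<in> {y \<in> Sn (p + q). st (take p y) = a \<and> st (drop p y) = b}. phi (set (take p y)) a b = y"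
    using phi_split by auto
  show "(\<lambda>y. set (take p y)) ` {y \<in> Sn (p + q). st (take p y) = a \<and> st (drop p y) = b}
      \<subseteq> {Q. Q \<subseteq> {1..p + q} \<and> card Q = p}"
  proof clarify
    fix y assume y: "y \<in> Sn (p + q)"
    show "set (take p y) \<subseteq> {1..p + q} \<and> card (set (take p y)) = p"
      using set_take_subset[of p y] Sn_set[OF y] distinct_card[OF distinct_take[OF Sn_distinct[OF y]]]
        length_Sn[OF y] by auto
  qed
qed

section \<open>H-families\<close>

locale H_fam =
  fixes \<Theta> :: "nat \<Rightarrow> (nat list \<times> nat list) set"
  assumes H_family: "H_family \<Theta>"
begin

lemma equiv_Theta: "equiv (Sn n) (\<Theta> n)"
  using H_family unfolding H_family_def lattice_cong_def by blast

lemma cong_in_Sn: "(x, y) \<in> \<Theta> n \<Longrightarrow> x \<in> Sn n \<and> y \<in> Sn n"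
  using equiv_Theta[of n] unfolding equiv_def refl_on_def by blast

lemma cong_refl: "x \<in> Sn n \<Longrightarrow> (x, x) \<in> \<Theta> n"
  using equiv_Theta[of n] unfolding equiv_def refl_on_def by blast

lemma cong_sym: "(x, y) \<in> \<Theta> n \<Longrightarrow> (y, x) \<in> \<Theta> n"
  using equiv_Theta[of n] unfolding equiv_def sym_def by blast

lemma cong_trans: "(x, y) \<in> \<Theta> n \<Longrightarrow> (y, z) \<in> \<Theta> n \<Longrightarrow> (x, z) \<in> \<Theta> n"
  using equiv_Theta[of n] unfolding equiv_def trans_def by blast

lemma cong_length: "(x, y) \<in> \<Theta> n \<Longrightarrow> length x = n \<and> length y = n"
  using cong_in_Sn length_Sn by blast

lemma cong_wmeet: "(x, y) \<in> \<Theta> n \<Longrightarrow> z \<in> Sn n \<Longrightarrow> (wmeet n x z, wmeet n y z) \<in> \<Theta> n"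
  using H_family unfolding H_family_def lattice_cong_def by blast

lemma cong_wjoin: "(x, y) \<in> \<Theta> n \<Longrightarrow> z \<in> Sn n \<Longrightarrow> (wjoin n x z, wjoin n y z) \<in> \<Theta> n"
  using H_family unfolding H_family_def lattice_cong_def by blast

lemma cong_shift_prod_iff:
  assumes "u \<in> Sn p" "u' \<in> Sn p" "v \<in> Sn q" "v' \<in> Sn q"
  shows "(shift_prod u v, shift_prod u' v') \<in> \<Theta> (p + q) \<longleftrightarrow> (u, u') \<in> \<Theta> p \<and> (v, v') \<in> \<Theta> q"
proof -
  have "translational \<Theta>" using H_family unfolding H_family_def by simp
  then show ?thesis using assms unfolding translational_def by simp
qed

lemma cong_phi:
  assumes "Q \<subseteq> {1..p + q}" "card Q = p" "(u, u') \<in> \<Theta> p" "(v, v') \<in> \<Theta> q"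
  shows "(phi Q u v, phi Q u' v') \<in> \<Theta> (p + q)"
proof -
  have "insertional \<Theta>" using H_family unfolding H_family_def by simp
  then show ?thesis using cong_in_Sn[OF assms(3)] cong_in_Sn[OF assms(4)]
    unfolding insertional_def using assms by blast
qed

lemma ex_class_min:
  assumes x: "x \<in> Sn n"
  shows "\<exists>m. (m, x) \<in> \<Theta> n \<and> (\<forall>y. (y, x) \<in> \<Theta> n \<longrightarrow> weak_le m y)"
proof -
  obtain m where m: "(m, x) \<in> \<Theta> n"
    and m_min: "\<And>y. (y, x) \<in> \<Theta> n \<Longrightarrow> card (inv_set m) \<le> card (inv_set y)"
    using ex_has_least_nat[of "\<lambda>m. (m, x) \<in> \<Theta> n" x "\<lambda>m. card (inv_set m)"] cong_refl[OF x] by blast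
  have mS: "m \<in> Sn n" using cong_in_Sn m by blast
  have "weak_le m y" if y: "(y, x) \<in> \<Theta> n" for y
  proof -
    have yS: "y \<in> Sn n" using cong_in_Sn y by blast
    define w where "w = wmeet n y m"
    have "(w, wmeet n m m) \<in> \<Theta> n"
      unfolding w_def using cong_wmeet cong_trans[OF y cong_sym[OF m]] mS by blast
    moreover have "wmeet n m m = m" using wmeet_eq_right[OF mS mS] unfolding weak_le_def by blast
    ultimately have "(w, x) \<in> \<Theta> n" using cong_trans[OF _ m] by simp
    then have "card (inv_set m) \<le> card (inv_set w)" by (rule m_min)
    moreover have "inv_set w \<subseteq> inv_set m" using wmeet_le2[OF yS mS] unfolding w_def weak_le_def .
    moreover have "finite (inv_set m)" using inv_set_subset_pos_pairs[OF mS] finite_pos_pairs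
      by (rule finite_subset)
    ultimately have "inv_set w = inv_set m" using card_seteq by blast
    then have "w = m" using weak_le_antisym[OF _ mS] wmeet_in_Sn[OF yS mS]
      unfolding w_def weak_le_def by blast
    then show ?thesis using wmeet_le1[OF yS mS] unfolding w_def by simp
  qed
  then show ?thesis using m by blast
qed

lemma
  assumes "x \<in> Sn (length x)"
  shows pi_down_cong: "(pi_down \<Theta> x, x) \<in> \<Theta> (length x)"
    and pi_down_le: "(y, x) \<in> \<Theta> (length x) \<Longrightarrow> weak_le (pi_down \<Theta> x) y"
proof -
  obtain m where m: "(m, x) \<in> \<Theta> (length x)" "\<forall>y. (y, x) \<in> \<Theta> (length x) \<longrightarrow> weak_le m y"
    using ex_class_min[OF assms] by blast
  have "m' = m" if "(m', x) \<in> \<Theta> (length x)" "\<forall>y. (y, x) \<in> \<Theta> (length x) \<longrightarrow> weak_le m' y" for m'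
    using that m cong_in_Sn weak_le_antisym by meson
  then have "pi_down \<Theta> x = m" unfolding pi_down_def
    by (intro the_equality) (use m in blast)+
  then show "(pi_down \<Theta> x, x) \<in> \<Theta> (length x)" "(y, x) \<in> \<Theta> (length x) \<Longrightarrow> weak_le (pi_down \<Theta> x) y"
    using m by auto
qed

lemma
  assumes "x \<in> Sn n"
  shows pi_down_cong_Sn: "(pi_down \<Theta> x, x) \<in> \<Theta> n"
    and pi_down_le_self: "weak_le (pi_down \<Theta> x) x"
  using pi_down_cong[of x] pi_down_le[of x x] cong_refl[OF assms] assms length_Sn[OF assms] by auto

lemma pi_down_eq_if_cong:
  assumes "(x, y) \<in> \<Theta> (length y)"
  shows "pi_down \<Theta> x = pi_down \<Theta> y"
proof -
  have "length x = length y" using cong_length assms by blast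
  moreover have "(m, x) \<in> \<Theta> (length y) \<longleftrightarrow> (m, y) \<in> \<Theta> (length y)" for m
    using assms cong_trans cong_sym by blast
  ultimately show ?thesis unfolding pi_down_def by simp
qed

lemma length_pi_down: "x \<in> Sn (length x) \<Longrightarrow> length (pi_down \<Theta> x) = length x"
  using cong_length pi_down_cong by blast

lemma pi_down_in_Zset: "x \<in> Sn (length x) \<Longrightarrow> pi_down \<Theta> x \<in> Zset \<Theta>"
proof -
  assume x: "x \<in> Sn (length x)"
  then have "pi_down \<Theta> (pi_down \<Theta> x) = pi_down \<Theta> x"
    using pi_down_eq_if_cong[OF pi_down_cong] by blast
  then show ?thesis
    unfolding Zset_def using cong_in_Sn[OF pi_down_cong[OF x]] length_pi_down[OF x] by simp
qed

lemma Zset_in_Sn: "z \<in> Zset \<Theta> \<Longrightarrow> z \<in> Sn (length z)"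
  and pi_down_Zset: "z \<in> Zset \<Theta> \<Longrightarrow> pi_down \<Theta> z = z"
  unfolding Zset_def by simp_all

lemma Zset_le_cong: "z \<in> Zset \<Theta> \<Longrightarrow> (y, z) \<in> \<Theta> (length z) \<Longrightarrow> weak_le z y"
  using pi_down_le[OF Zset_in_Sn] pi_down_Zset by fastforce

lemma pi_down_eq_Zset: "z \<in> Zset \<Theta> \<Longrightarrow> (a, z) \<in> \<Theta> (length z) \<Longrightarrow> pi_down \<Theta> a = z"
  using pi_down_eq_if_cong pi_down_Zset by fastforce

lemma cong_Zset_iff:
  assumes "z \<in> Zset \<Theta>"
  shows "(a, z) \<in> \<Theta> (length z) \<longleftrightarrow> a \<in> Sn (length a) \<and> pi_down \<Theta> a = z"
proof
  assume h: "(a, z) \<in> \<Theta> (length z)"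
  then show "a \<in> Sn (length a) \<and> pi_down \<Theta> a = z"
    using cong_in_Sn[OF h] cong_length[OF h] pi_down_eq_Zset[OF assms] by auto
next
  assume h: "a \<in> Sn (length a) \<and> pi_down \<Theta> a = z"
  then show "(a, z) \<in> \<Theta> (length z)"
    using cong_sym[OF pi_down_cong] length_pi_down by fastforce
qed

lemma cong_bar:
  assumes "(x, y) \<in> \<Theta> n" "p \<le> n"
  shows "(bar p x, bar p y) \<in> \<Theta> n"
proof -
  obtain w where "w \<in> Sn n" "inv_set w = pos_pairs n \<inter> same_side p"
    using ex_Sn_inv_set_same_side by blast
  then show ?thesis
    using cong_wmeet[OF assms(1)] bar_eq_wmeet[OF _ assms(2)] cong_in_Sn[OF assms(1)] by metis
qed

text \<open>With \<open>t = bar p m\<close>, \<open>s = \<pi>\<^sub>\<down>t\<close> and \<open>z\<close> having exactly the crossing inversions: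
  \<open>m \<le> t \<or> z\<close>, so \<open>m = (t \<or> z) \<and> m \<equiv> (s \<or> z) \<and> m\<close>; minimality of \<open>m\<close> gives
  \<open>m \<le> s \<or> z\<close>, whose inversions are those of \<open>s\<close> plus the crossing pairs, hence \<open>t \<le> s\<close>.\<close>

lemma Zset_bar:
  assumes m: "m \<in> Zset \<Theta>" and p: "p \<le> length m"
  shows "bar p m \<in> Zset \<Theta>"
proof -
  define n t s where "n = length m" and "t = bar p m" and "s = pi_down \<Theta> t"
  have mS: "m \<in> Sn n" using Zset_in_Sn[OF m] unfolding n_def .
  have tS: "t \<in> Sn n" unfolding t_def using bar_in_Sn[OF mS] p n_def by simp
  have inv_t: "inv_set t = inv_set m \<inter> same_side p"
    unfolding t_def using inv_set_bar[OF mS] p n_def by simp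
  have st: "(s, t) \<in> \<Theta> n" and s_le: "weak_le s t"
    unfolding s_def using pi_down_cong_Sn[OF tS] pi_down_le_self[OF tS] by auto
  have sS: "s \<in> Sn n" using cong_in_Sn[OF st] by blast
  have inv_s: "inv_set s \<subseteq> pos_pairs n \<inter> same_side p"
    using s_le inv_t inv_set_subset_pos_pairs[OF sS] unfolding weak_le_def by blast
  obtain z where z: "z \<in> Sn n" "inv_set z = cross_pairs n p"
    using ex_Sn_inv_set_cross_pairs by blast
  have "inv_set m \<subseteq> inv_set t \<union> inv_set z"
    using inv_t z(2) inv_set_subset_pos_pairs[OF mS]
    unfolding pos_pairs_def same_side_def cross_pairs_def by auto
  then have "weak_le m (wjoin n t z)"
    unfolding weak_le_def inv_set_wjoin[OF tS z(1)] by (blast intro: r_into_trancl')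
  then have "wmeet n (wjoin n t z) m = m"
    using wmeet_eq_right[OF wjoin_in_Sn[OF tS z(1)] mS] by simp
  moreover have "(wmeet n (wjoin n t z) m, wmeet n (wjoin n s z) m) \<in> \<Theta> n"
    using cong_wmeet[OF cong_wjoin[OF cong_sym[OF st] z(1)] mS] .
  ultimately have "weak_le m (wmeet n (wjoin n s z) m)"
    using Zset_le_cong[OF m] cong_sym unfolding n_def by simp
  then have "weak_le m (wjoin n s z)"
    using wmeet_le1[OF wjoin_in_Sn[OF sS z(1)] mS] unfolding weak_le_def by blast
  moreover have "inv_set (wjoin n s z) = inv_set s \<union> cross_pairs n p"
    using inv_set_wjoin[OF sS z(1)] z(2)
      trans_Un_cross_pairs[OF inv_s trans_inv_set[OF Sn_distinct[OF sS]]]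
    by simp
  ultimately have "weak_le t s"
    using inv_t unfolding weak_le_def same_side_def cross_pairs_def by auto
  then have "s = t" using weak_le_antisym[OF sS tS] s_le by blast
  then show ?thesis unfolding Zset_def t_def[symmetric] s_def using tS length_Sn by simp
qed

lemma shift_prod_Zset:
  assumes u: "u \<in> Sn p" and v: "v \<in> Sn q" and uv: "shift_prod u v \<in> Zset \<Theta>"
  shows "u \<in> Zset \<Theta> \<and> v \<in> Zset \<Theta>"
proof -
  define u0 v0 where "u0 = pi_down \<Theta> u" and "v0 = pi_down \<Theta> v"
  have u0: "(u0, u) \<in> \<Theta> p" "weak_le u0 u" and v0: "(v0, v) \<in> \<Theta> q" "weak_le v0 v"
    unfolding u0_def v0_def using pi_down_cong_Sn pi_down_le_self u v by auto
  have u0S: "u0 \<in> Sn p" and v0S: "v0 \<in> Sn q" using cong_in_Sn u0(1) v0(1) by blast+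
  have "(shift_prod u0 v0, shift_prod u v) \<in> \<Theta> (p + q)"
    using cong_shift_prod_iff[OF u0S u v0S v] u0(1) v0(1) by blast
  then have "weak_le (shift_prod u v) (shift_prod u0 v0)"
    using Zset_le_cong[OF uv] length_Sn[OF shift_prod_in_Sn[OF u v]] by simp
  moreover have "weak_le (shift_prod u0 v0) (shift_prod u v)"
    using weak_le_shift_prod[OF u0S u v0S v u0(2) v0(2)] .
  ultimately have "shift_prod u0 v0 = shift_prod u v"
    using weak_le_antisym shift_prod_in_Sn[OF u0S v0S] shift_prod_in_Sn[OF u v] by blast
  then have "u0 = u" "v0 = v" using shift_prod_inj length_Sn[OF u0S] length_Sn[OF u] by metis+
  then show ?thesis unfolding Zset_def u0_def v0_def using u v length_Sn by simp
qed

lemma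
  assumes x: "x \<in> Sn n" and p: "p \<le> n"
  shows pi_down_lower_std: "pi_down \<Theta> (lower_std p x) = lower_std p (pi_down \<Theta> x)"
    and pi_down_upper_std: "pi_down \<Theta> (upper_std p x) = upper_std p (pi_down \<Theta> x)"
proof -
  define y where "y = pi_down \<Theta> x"
  have yx: "(y, x) \<in> \<Theta> n" using pi_down_cong_Sn[OF x] unfolding y_def .
  have yS: "y \<in> Sn n" using cong_in_Sn[OF yx] by blast
  have "bar p y \<in> Zset \<Theta>"
    using Zset_bar pi_down_in_Zset x p length_Sn[OF yS] length_Sn[OF x] unfolding y_def by simp
  then have Z: "lower_std p y \<in> Zset \<Theta>" "upper_std p y \<in> Zset \<Theta>"
    using shift_prod_Zset[OF lower_std_in_Sn[OF yS p] upper_std_in_Sn[OF yS p]]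
    unfolding bar_eq_shift_prod_std by auto
  have "(bar p y, bar p x) \<in> \<Theta> (p + (n - p))" using cong_bar[OF yx p] p by simp
  then have "(lower_std p y, lower_std p x) \<in> \<Theta> p" "(upper_std p y, upper_std p x) \<in> \<Theta> (n - p)"
    unfolding bar_eq_shift_prod_std
    using cong_shift_prod_iff[OF lower_std_in_Sn[OF yS p] lower_std_in_Sn[OF x p]
        upper_std_in_Sn[OF yS p] upper_std_in_Sn[OF x p]] by auto
  then show "pi_down \<Theta> (lower_std p x) = lower_std p y" "pi_down \<Theta> (upper_std p x) = upper_std p y"
    using pi_down_eq_Zset[OF Z(1)] pi_down_eq_Zset[OF Z(2)] cong_sym
      length_Sn[OF lower_std_in_Sn[OF yS p]] length_Sn[OF upper_std_in_Sn[OF yS p]] by auto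
qed

end

section \<open>The embedding of the algebra of class minima\<close>

lemma supp_sum_subset: "supp (\<lambda>x. \<Sum>i\<in>A. h i x) \<subseteq> (\<Union>i\<in>A. supp (h i))"
  unfolding supp_def by (auto elim: sum.not_neutral_contains_not_neutral)

lemma sum_supp_delta:
  assumes "finite (supp f)"
  shows "(\<Sum>u\<in>supp f. if u = a then f u else 0) = f a"
  using assms by (simp add: supp_def)

lemma sum_supp_of_bool_eq:
  fixes f :: "'a \<Rightarrow> 'k::semiring_1"
  assumes "finite (supp f)" and "\<And>z. z \<in> supp f \<Longrightarrow> P z \<longleftrightarrow> z = c \<and> R"
  shows "(\<Sum>z\<in>supp f. f z * of_bool (P z)) = (if R then f c else 0)"
proof -
  have "(\<Sum>z\<in>supp f. f z * of_bool (P z)) = (\<Sum>z\<in>supp f. if z = c then (if R then f z else 0) else 0)"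
    using assms(2) by (intro sum.cong) auto
  also have "\<dots> = (if R then f c else 0)"
    using assms(1) by (simp add: supp_def)
  finally show ?thesis .
qed

lemma sum_supp_indicator:
  fixes F :: "'a \<Rightarrow> 'k::semiring_1"
  assumes "finite (supp F)" "finite Y"
  shows "(\<Sum>y\<in>supp F. F y * of_bool (y \<in> Y)) = (\<Sum>y\<in>Y. F y)"
proof -
  have "(\<Sum>y\<in>supp F. F y * of_bool (y \<in> Y)) = (\<Sum>y\<in>supp F. if y \<in> Y then F y else 0)"
    by (intro sum.cong) auto
  also have "\<dots> = (\<Sum>y\<in>supp F \<inter> Y. F y)"
    by (rule sum.inter_restrict[OF assms(1), symmetric])
  also have "\<dots> = (\<Sum>y\<in>Y. F y)"
    by (rule sum.mono_neutral_left) (use assms(2) in \<open>auto simp: supp_def\<close>)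
  finally show ?thesis .
qed

lemma of_bool_bar_eq_sum:
  assumes x: "x \<in> Sn n"
  shows "(of_bool (length u + length v = n \<and> bar (length u) x = shift_prod u v) :: 'k::semiring_1)
    = (\<Sum>p\<le>n. of_bool (u = lower_std p x \<and> v = upper_std p x))"
proof -
  define k where "k = length u"
  have "(\<Sum>p\<le>n. of_bool (u = lower_std p x \<and> v = upper_std p x) :: 'k)
      = (\<Sum>p\<le>n. if p = k then of_bool (u = lower_std p x \<and> v = upper_std p x) else 0)"
  proof (rule sum.cong[OF refl])
    fix p assume "p \<in> {..n}"
    then have "length (lower_std p x) = p" using length_lower_std[OF x] by simp
    then show "of_bool (u = lower_std p x \<and> v = upper_std p x) =
        (if p = k then of_bool (u = lower_std p x \<and> v = upper_std p x) else (0 :: 'k))"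
      unfolding k_def by auto
  qed
  also have "\<dots> = of_bool (k \<le> n \<and> u = lower_std k x \<and> v = upper_std k x)"
    by simp
  also have "\<dots> = of_bool (k + length v = n \<and> bar k x = shift_prod u v)"
  proof (rule arg_cong[where f = of_bool], rule iffI)
    assume h: "k \<le> n \<and> u = lower_std k x \<and> v = upper_std k x"
    then have "length v = n - k" using length_Sn[OF upper_std_in_Sn[OF x]] by auto
    then show "k + length v = n \<and> bar k x = shift_prod u v"
      using h unfolding bar_eq_shift_prod_std by simp
  next
    assume h: "k + length v = n \<and> bar k x = shift_prod u v"
    then have "length (lower_std k x) = length u" using length_lower_std[OF x] k_def by simp
    moreover have "shift_prod (lower_std k x) (upper_std k x) = shift_prod u v"
      using h unfolding bar_eq_shift_prod_std by simp
    ultimately show "k \<le> n \<and> u = lower_std k x \<and> v = upper_std k x"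
      using h shift_prod_inj by (metis le_add1)
  qed
  finally show ?thesis unfolding k_def by (rule sym)
qed

lemma sum_bar_eq_sum_split:
  fixes f g :: "nat list \<Rightarrow> 'k::comm_semiring_1"
  assumes f: "finite (supp f)" and g: "finite (supp g)" and x: "x \<in> Sn n"
  shows "(\<Sum>u\<in>supp f. \<Sum>v\<in>supp g.
      f u * g v * of_bool (length u + length v = n \<and> bar (length u) x = shift_prod u v))
    = (\<Sum>p\<le>n. f (lower_std p x) * g (upper_std p x))"
proof -
  let ?L = "\<lambda>p u. if u = lower_std p x then f u else 0"
  let ?U = "\<lambda>p v. if v = upper_std p x then g v else 0"
  have split: "f u * g v * of_bool (u = lower_std p x \<and> v = upper_std p x) = ?L p u * ?U p v" for u v p
    by simp
  have "(\<Sum>u\<in>supp f. \<Sum>v\<in>supp g.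
      f u * g v * of_bool (length u + length v = n \<and> bar (length u) x = shift_prod u v))
      = (\<Sum>u\<in>supp f. \<Sum>v\<in>supp g. \<Sum>p\<le>n. ?L p u * ?U p v)"
    unfolding of_bool_bar_eq_sum[OF x] sum_distrib_left split ..
  also have "\<dots> = (\<Sum>u\<in>supp f. \<Sum>p\<le>n. \<Sum>v\<in>supp g. ?L p u * ?U p v)"
    by (rule sum.cong[OF refl], rule sum.swap)
  also have "\<dots> = (\<Sum>p\<le>n. (\<Sum>u\<in>supp f. ?L p u) * (\<Sum>v\<in>supp g. ?U p v))"
    unfolding sum_product by (rule sum.swap)
  also have "\<dots> = (\<Sum>p\<le>n. f (lower_std p x) * g (upper_std p x))"
    using sum_supp_delta[OF f] sum_supp_delta[OF g] by simp
  finally show ?thesis .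
qed

lemma mulS_apply:
  assumes "finite (supp f)" "finite (supp g)"
  shows "mulS f g x =
    (if x \<in> Sn (length x) then \<Sum>p\<le>length x. f (lower_std p x) * g (upper_std p x) else 0)"
proof (cases "x \<in> Sn (length x)")
  case True
  then have "x \<in> Sn m \<longleftrightarrow> m = length x" for m using length_Sn by metis
  then have basis: "prodS_basis u v x =
      of_bool (length u + length v = length x \<and> bar (length u) x = shift_prod u v)" for u v
    unfolding prodS_basis_def by simp
  show ?thesis unfolding mulS_def basis sum_bar_eq_sum_split[OF assms True] using True by simp
next
  case False
  then have "x \<notin> Sn m" for m using length_Sn by metis
  then show ?thesis unfolding mulS_def prodS_basis_def using False by simp
qed

lemma coprodS_basis_eq:
  "coprodS_basis y (a, b) =
    of_bool (length a + length b = length y \<and> a = st (take (length a) y) \<and> b = st (drop (length a) y))"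
proof -
  have "(\<exists>p\<le>length y. a = st (take p y) \<and> b = st (drop p y)) \<longleftrightarrow>
      length a + length b = length y \<and> a = st (take (length a) y) \<and> b = st (drop (length a) y)"
  proof
    assume "\<exists>p\<le>length y. a = st (take p y) \<and> b = st (drop p y)"
    then obtain p where p: "p \<le> length y" "a = st (take p y)" "b = st (drop p y)" by blast
    then have "length a = p" "length b = length y - p" by simp_all
    then show "length a + length b = length y \<and> a = st (take (length a) y) \<and> b = st (drop (length a) y)"
      using p by simp
  next
    assume h: "length a + length b = length y \<and> a = st (take (length a) y) \<and> b = st (drop (length a) y)"
    then have "length a \<le> length y" by linarith
    with h show "\<exists>p\<le>length y. a = st (take p y) \<and> b = st (drop p y)" by blast
  qed
  then show ?thesis unfolding coprodS_basis_def by simp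
qed

lemma finite_supp_coprodS_basis: "finite (supp (coprodS_basis y))"
proof (rule finite_subset)
  show "supp (coprodS_basis y) \<subseteq> (\<lambda>k. (st (take k y), st (drop k y))) ` {..length y}"
    unfolding supp_def coprodS_basis_def by auto
qed simp

lemma finite_supp_DeltaS:
  fixes F :: "nat list \<Rightarrow> 'k::field"
  assumes "F \<in> KS"
  shows "finite (supp (DeltaS F))"
proof (rule finite_subset)
  have "supp (DeltaS F) \<subseteq> (\<Union>y\<in>supp F. supp (\<lambda>ab. F y * coprodS_basis y ab))"
    unfolding DeltaS_def by (rule supp_sum_subset)
  also have "\<dots> \<subseteq> (\<Union>y\<in>supp F. supp (coprodS_basis y :: _ \<Rightarrow> 'k))"
    unfolding supp_def by auto
  finally show "supp (DeltaS F) \<subseteq> (\<Union>y\<in>supp F. supp (coprodS_basis y :: _ \<Rightarrow> 'k))" .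
qed (use assms finite_supp_coprodS_basis in \<open>auto simp: KS_def\<close>)

lemma DeltaS_apply:
  fixes F :: "nat list \<Rightarrow> 'k::field"
  assumes F: "F \<in> KS" and a: "a \<in> Sn p" and b: "b \<in> Sn q"
  shows "DeltaS F (a, b) = (\<Sum>Q\<in>{Q. Q \<subseteq> {1..p + q} \<and> card Q = p}. F (phi Q a b))"
proof -
  define Y where "Y = {y \<in> Sn (p + q). st (take p y) = a \<and> st (drop p y) = b}"
  have "coprodS_basis y (a, b) = (of_bool (y \<in> Y) :: 'k)" if "y \<in> supp F" for y
  proof -
    have "y \<in> Sn (length y)" using F that unfolding KS_def by blast
    then have "y \<in> Sn (p + q) \<longleftrightarrow> p + q = length y" using length_Sn by metis
    then show ?thesis unfolding coprodS_basis_eq Y_def length_Sn[OF a] length_Sn[OF b] by auto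
  qed
  then have "DeltaS F (a, b) = (\<Sum>y\<in>supp F. F y * of_bool (y \<in> Y))"
    unfolding DeltaS_def by simp
  also have "\<dots> = (\<Sum>y\<in>Y. F y)"
    using F finite_Sn unfolding KS_def Y_def by (intro sum_supp_indicator) auto
  also have "\<dots> = (\<Sum>Q\<in>{Q. Q \<subseteq> {1..p + q} \<and> card Q = p}. F (phi Q a b))"
    unfolding Y_def using bij_betw_phi[OF a b] by (rule sum.reindex_bij_betw[symmetric])
  finally show ?thesis .
qed

lemma DeltaS_eq_0:
  fixes F :: "nat list \<Rightarrow> 'k::field"
  assumes F: "F \<in> KS" and ab: "\<not> (a \<in> Sn (length a) \<and> b \<in> Sn (length b))"
  shows "DeltaS F (a, b) = 0"
proof -
  have "coprodS_basis y (a, b) = (0 :: 'k)" if y: "y \<in> supp F" for y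
  proof (rule ccontr)
    assume "coprodS_basis y (a, b) \<noteq> (0 :: 'k)"
    then obtain k where "a = st (take k y)" "b = st (drop k y)"
      unfolding coprodS_basis_def by (auto split: if_splits)
    moreover have "distinct y" using F y Sn_distinct unfolding KS_def by blast
    ultimately show False using ab st_in_Sn[of "take k y"] st_in_Sn[of "drop k y"] by simp
  qed
  then show ?thesis unfolding DeltaS_def by (simp add: sum.neutral)
qed

context H_fam
begin

lemma cmap_apply:
  assumes "f \<in> KZ \<Theta>"
  shows "cmap \<Theta> f x = (if x \<in> Sn (length x) then f (pi_down \<Theta> x) else 0)"
  unfolding cmap_def using assms cong_Zset_iff unfolding KZ_def
  by (intro sum_supp_of_bool_eq) auto

lemma cc_map_apply:
  assumes "finite (supp F)" "supp F \<subseteq> Zset \<Theta> \<times> Zset \<Theta>"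
  shows "cc_map \<Theta> F (a, b) =
    (if a \<in> Sn (length a) \<and> b \<in> Sn (length b) then F (pi_down \<Theta> a, pi_down \<Theta> b) else 0)"
  unfolding cc_map_def prod.case using assms cong_Zset_iff
  by (intro sum_supp_of_bool_eq) auto

lemma cmap_eq_if_cong:
  assumes "f \<in> KZ \<Theta>" "(x, y) \<in> \<Theta> (length y)"
  shows "cmap \<Theta> f x = cmap \<Theta> f y"
  using cmap_apply[OF assms(1)] pi_down_eq_if_cong[OF assms(2)] cong_in_Sn[OF assms(2)]
    cong_length[OF assms(2)]
  by simp

lemma cmap_in_KS:
  assumes f: "f \<in> KZ \<Theta>"
  shows "cmap \<Theta> f \<in> KS"
proof -
  have "supp (cmap \<Theta> f) \<subseteq> (\<Union>z\<in>supp f. Sn (length z))"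
    using supp_sum_subset[of "\<lambda>z y. f z * of_bool ((y, z) \<in> \<Theta> (length z))" "supp f"] cong_in_Sn
    unfolding cmap_def supp_def by fastforce
  moreover have "finite (\<Union>z\<in>supp f. Sn (length z))" using f finite_Sn unfolding KZ_def by blast
  moreover have "x \<in> Sn (length x)" if "x \<in> supp (cmap \<Theta> f)" for x
    using that cmap_apply[OF f, of x] unfolding supp_def by (auto split: if_splits)
  ultimately show ?thesis unfolding KS_def by (blast intro: finite_subset)
qed

lemma mulZ_apply:
  assumes "finite (supp f)" "finite (supp g)"
  shows "mulZ \<Theta> f g x =
    (if x \<in> Zset \<Theta> then \<Sum>p\<le>length x. f (lower_std p x) * g (upper_std p x) else 0)"
proof (cases "x \<in> Zset \<Theta>")
  case True
  then have basis: "prodZ_basis \<Theta> u v x =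
      of_bool (length u + length v = length x \<and> bar (length u) x = shift_prod u v)" for u v
    unfolding prodZ_basis_def by auto
  show ?thesis
    unfolding mulZ_def basis sum_bar_eq_sum_split[OF assms Zset_in_Sn[OF True]] using True by simp
qed (simp add: mulZ_def prodZ_basis_def)

lemma mulZ_in_KZ:
  assumes f: "f \<in> KZ \<Theta>" and g: "g \<in> KZ \<Theta>"
  shows "mulZ \<Theta> f g \<in> KZ \<Theta>"
proof -
  have "supp (mulZ \<Theta> f g) \<subseteq> (\<Union>u\<in>supp f. supp (\<lambda>x. \<Sum>v\<in>supp g. f u * g v * prodZ_basis \<Theta> u v x))"
    unfolding mulZ_def by (rule supp_sum_subset)
  also have "\<dots> \<subseteq> (\<Union>u\<in>supp f. \<Union>v\<in>supp g. supp (\<lambda>x. f u * g v * prodZ_basis \<Theta> u v x))"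
    by (intro UN_mono order_refl supp_sum_subset)
  also have "\<dots> \<subseteq> (\<Union>u\<in>supp f. \<Union>v\<in>supp g. Sn (length u + length v) \<inter> Zset \<Theta>)"
    unfolding supp_def prodZ_basis_def by (auto dest!: Zset_in_Sn) blast
  finally have "supp (mulZ \<Theta> f g) \<subseteq> (\<Union>u\<in>supp f. \<Union>v\<in>supp g. Sn (length u + length v) \<inter> Zset \<Theta>)" .
  moreover have "finite (\<Union>u\<in>supp f. \<Union>v\<in>supp g. Sn (length u + length v) \<inter> Zset \<Theta>)"
    using f g finite_Sn unfolding KZ_def by blast
  ultimately show ?thesis unfolding KZ_def by (blast intro: finite_subset)
qed

lemma cmap_mulZ:
  assumes f: "f \<in> KZ \<Theta>" and g: "g \<in> KZ \<Theta>"
  shows "cmap \<Theta> (mulZ \<Theta> f g) = mulS (cmap \<Theta> f) (cmap \<Theta> g)"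
proof
  fix x
  have fin: "finite (supp f)" "finite (supp g)" "finite (supp (cmap \<Theta> f))" "finite (supp (cmap \<Theta> g))"
    using f g cmap_in_KS[OF f] cmap_in_KS[OF g] unfolding KZ_def KS_def by auto
  show "cmap \<Theta> (mulZ \<Theta> f g) x = mulS (cmap \<Theta> f) (cmap \<Theta> g) x"
  proof (cases "x \<in> Sn (length x)")
    case True
    define n y where "n = length x" and "y = pi_down \<Theta> x"
    have x: "x \<in> Sn n" using True n_def by simp
    have y: "y \<in> Zset \<Theta>" "length y = n" unfolding y_def n_def
      using pi_down_in_Zset length_pi_down True by auto
    have "cmap \<Theta> (mulZ \<Theta> f g) x = (\<Sum>p\<le>n. f (lower_std p y) * g (upper_std p y))"
      using cmap_apply[OF mulZ_in_KZ[OF f g]] mulZ_apply[OF fin(1,2)] True y unfolding y_def by simp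
    also have "\<dots> = (\<Sum>p\<le>n. cmap \<Theta> f (lower_std p x) * cmap \<Theta> g (upper_std p x))"
    proof (rule sum.cong[OF refl])
      fix p assume "p \<in> {..n}"
      then have p: "p \<le> n" by simp
      show "f (lower_std p y) * g (upper_std p y) = cmap \<Theta> f (lower_std p x) * cmap \<Theta> g (upper_std p x)"
        using cmap_apply[OF f] cmap_apply[OF g] lower_std_in_Sn[OF x p] upper_std_in_Sn[OF x p]
          length_Sn pi_down_lower_std[OF x p] pi_down_upper_std[OF x p] unfolding y_def by metis
    qed
    also have "\<dots> = mulS (cmap \<Theta> f) (cmap \<Theta> g) x" using mulS_apply[OF fin(3,4)] True n_def by simp
    finally show ?thesis .
  next
    case False
    then show ?thesis using cmap_apply[OF mulZ_in_KZ[OF f g]] mulS_apply[OF fin(3,4)] by simp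
  qed
qed

lemma DeltaS_cmap_pi_down:
  assumes f: "f \<in> KZ \<Theta>" and a: "a \<in> Sn p" and b: "b \<in> Sn q"
  shows "DeltaS (cmap \<Theta> f) (pi_down \<Theta> a, pi_down \<Theta> b) = DeltaS (cmap \<Theta> f) (a, b)"
proof -
  have a0: "(pi_down \<Theta> a, a) \<in> \<Theta> p" and b0: "(pi_down \<Theta> b, b) \<in> \<Theta> q"
    using pi_down_cong_Sn a b by auto
  then have a0S: "pi_down \<Theta> a \<in> Sn p" and b0S: "pi_down \<Theta> b \<in> Sn q" using cong_in_Sn by blast+
  have "cmap \<Theta> f (phi Q (pi_down \<Theta> a) (pi_down \<Theta> b)) = cmap \<Theta> f (phi Q a b)"
    if Q: "Q \<subseteq> {1..p + q}" "card Q = p" for Q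
  proof -
    have "(phi Q (pi_down \<Theta> a) (pi_down \<Theta> b), phi Q a b) \<in> \<Theta> (p + q)" by (rule cong_phi[OF Q a0 b0])
    moreover have "length (phi Q a b) = p + q" using phi_spec[OF Q a b] length_Sn by blast
    ultimately show ?thesis using cmap_eq_if_cong[OF f] by simp
  qed
  then show ?thesis
    unfolding DeltaS_apply[OF cmap_in_KS[OF f] a0S b0S] DeltaS_apply[OF cmap_in_KS[OF f] a b] by simp
qed

lemma DeltaS_cmap:
  assumes f: "f \<in> KZ \<Theta>"
  shows "DeltaS (cmap \<Theta> f) = cc_map \<Theta> (DeltaZ \<Theta> f)"
proof (rule ext, clarify)
  fix a b :: "nat list"
  let ?F = "cmap \<Theta> f"
  have F: "?F \<in> KS" by (rule cmap_in_KS[OF f])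
  have "supp (DeltaZ \<Theta> f) \<subseteq> supp (DeltaS ?F)" "supp (DeltaZ \<Theta> f) \<subseteq> Zset \<Theta> \<times> Zset \<Theta>"
    unfolding DeltaZ_def rr_map_def supp_def by (auto split: if_splits)
  then have G: "finite (supp (DeltaZ \<Theta> f))" "supp (DeltaZ \<Theta> f) \<subseteq> Zset \<Theta> \<times> Zset \<Theta>"
    using finite_supp_DeltaS[OF F] finite_subset by auto
  show "DeltaS ?F (a, b) = cc_map \<Theta> (DeltaZ \<Theta> f) (a, b)"
  proof (cases "a \<in> Sn (length a) \<and> b \<in> Sn (length b)")
    case True
    then have "a \<in> Sn (length a)" "b \<in> Sn (length b)" by auto
    then show ?thesis
      unfolding cc_map_apply[OF G] using pi_down_in_Zset DeltaS_cmap_pi_down[OF f]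
      by (simp add: DeltaZ_def rr_map_def)
  next
    case False
    then show ?thesis unfolding cc_map_apply[OF G] if_not_P[OF False] by (rule DeltaS_eq_0[OF F])
  qed
qed

lemma pi_down_Nil: "pi_down \<Theta> [] = []"
  using length_pi_down[of "[]"] by (simp add: Sn_def)

lemma unitK_in_KZ: "(unitK :: nat list \<Rightarrow> 'k::field) \<in> KZ \<Theta>"
proof -
  have "supp (unitK :: nat list \<Rightarrow> 'k) = {[]}" unfolding supp_def unitK_def by auto
  then show ?thesis unfolding KZ_def using pi_down_Nil by (auto simp: Zset_def Sn_def)
qed

lemma cmap_unitK: "cmap \<Theta> (unitK :: nat list \<Rightarrow> 'k::field) = unitK"
proof
  fix x
  have "x \<in> Sn (length x) \<Longrightarrow> pi_down \<Theta> x = [] \<longleftrightarrow> x = []" using length_pi_down by fastforce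
  moreover have "x = [] \<Longrightarrow> x \<in> Sn (length x)" by (simp add: Sn_def)
  ultimately show "cmap \<Theta> unitK x = unitK x"
    unfolding cmap_apply[OF unitK_in_KZ] by (auto simp: unitK_def)
qed

lemma counitK_cmap:
  fixes f :: "nat list \<Rightarrow> 'k::field"
  assumes "f \<in> KZ \<Theta>"
  shows "counitK (cmap \<Theta> f) = counitK f"
  unfolding counitK_def cmap_apply[OF assms] using pi_down_Nil by (simp add: Sn_def)

lemma inj_on_cmap: "inj_on (cmap \<Theta> :: (nat list \<Rightarrow> 'k::field) \<Rightarrow> _) (KZ \<Theta>)"
proof (rule inj_onI, rule ext)
  fix f g :: "nat list \<Rightarrow> 'k" and x
  assume f: "f \<in> KZ \<Theta>" and g: "g \<in> KZ \<Theta>" and fg: "cmap \<Theta> f = cmap \<Theta> g"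
  show "f x = g x"
  proof (cases "x \<in> Zset \<Theta>")
    case True
    then show ?thesis
      using fg cmap_apply[OF f, of x] cmap_apply[OF g, of x] Zset_in_Sn pi_down_Zset by simp
  next
    case False
    then have "f x = 0" "g x = 0" using f g unfolding KZ_def supp_def by auto
    then show ?thesis by simp
  qed
qed

end

theorem corollary1p4:
  fixes \<Theta> :: "nat \<Rightarrow> (nat list \<times> nat list) set"
  assumes "H_family \<Theta>"
  shows "inj_on (cmap \<Theta> :: (nat list \<Rightarrow> 'k::field) \<Rightarrow> _) (KZ \<Theta>)
    \<and> (\<forall>f\<in>KZ \<Theta>. (cmap \<Theta> f :: nat list \<Rightarrow> 'k) \<in> KS)
    \<and> (\<forall>f\<in>KZ \<Theta>. \<forall>g\<in>KZ \<Theta>. (cmap \<Theta> (mulZ \<Theta> f g) :: nat list \<Rightarrow> 'k)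
           = mulS (cmap \<Theta> f) (cmap \<Theta> g))
    \<and> (\<forall>f\<in>KZ \<Theta>. (DeltaS (cmap \<Theta> f) :: nat list \<times> nat list \<Rightarrow> 'k)
           = cc_map \<Theta> (DeltaZ \<Theta> f))
    \<and> (unitK :: nat list \<Rightarrow> 'k) \<in> KZ \<Theta> \<and> cmap \<Theta> (unitK :: nat list \<Rightarrow> 'k) = unitK
    \<and> (\<forall>f\<in>KZ \<Theta>. counitK (cmap \<Theta> f :: nat list \<Rightarrow> 'k) = counitK f)"
proof -
  interpret H_fam \<Theta> by (rule H_fam.intro) (rule assms)
  show ?thesis
    using inj_on_cmap cmap_in_KS cmap_mulZ DeltaS_cmap unitK_in_KZ cmap_unitK counitK_cmap by blast
qed

end
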